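(* For all $(n,k)\in\mathcal{I}$ with $n\neq0$, writing $l=l_{n,k}$, $m=m_{n,k}$, $r=r_{n,k}$: (i) $M_{n,k}=L_{n,k}+R_{n,k}$; (ii) $\Sigma_{n,k}^{-1}=\big(h_m(l,m)\big)^{-1}+\big(h_m(m,r)\big)^{-1}$.
   Context: Let $d,m\geq 1$. Let $\alpha:[0,1]\to\mathbb{R}^{d\times d}$, $\sqrt{\Gamma}:[0,1]\to\mathbb{R}^{d\times m}$ be continuous, $\Gamma=\sqrt{\Gamma}\sqrt{\Gamma}^{T}$. Let $F(s,t)$ be the flow ($\partial_tF(s,t)=\alpha(t)F(s,t)$, $F(s,s)=I_d$), $h_u(s,t)=\int_s^t F(w,u)\Gamma(w)F(w,u)^Tdw$, $h=h_0$, $g(t)=F(0,t)$. Non-degeneracy: $F(u,v)h_u(u,v)F(u,v)^T$ is positive definite for all $0\le u<v\le1$ (this is the conditional covariance of $X_v$ given $X_u$ for the solution $X$ of $dX_t=\alpha X_tdt+\sqrt{\Gamma}dW_t$, $X_0=0$). $\mathcal{I}=\{(0,0)\}\cup\{(n,k):n\ge1,\ 0\le k<2^{n-1}\}$. Partition: fix $\rho\in(0,1)$ and reals $l_{n,k}<m_{n,k}<r_{n,k}$ ($n\ge1$) with $l_{1,0}=0$, $r_{1,0}=1$, $l_{n+1,2k}=l_{n,k}$, $r_{n+1,2k}=l_{n+1,2k+1}=m_{n,k}$, $r_{n+1,2k+1}=r_{n,k}$, $\max(r_{n,k}-m_{n,k},m_{n,k}-l_{n,k})<\rho(r_{n,k}-l_{n,k})$.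 For $n\ge1$: $\Sigma_{n,k}=h_m(l,m)h_m(l,r)^{-1}h_m(m,r)$; $\sigma_{n,k}$ is its lower-triangular Cholesky factor with positive diagonal ($\sigma_{n,k}\sigma_{n,k}^T=\Sigma_{n,k}$); $L_{n,k}=h(l,m)^{-1}g(m)^{-1}\sigma_{n,k}$, $R_{n,k}=h(m,r)^{-1}g(m)^{-1}\sigma_{n,k}$, $M_{n,k}=g(m)^T(\sigma_{n,k}^{-1})^T$. *)

theory Defs
  imports "HOL-Analysis.Analysis"
begin

text \<open>Matrices are HOL-Analysis matrices: real^'c^'r has rows indexed by 'r, columns by 'c.\<close>

definition is_flow :: "(real \<Rightarrow> real^'d^'d) \<Rightarrow> (real \<Rightarrow> real \<Rightarrow> real^'d^'d) \<Rightarrow> bool" where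
  "is_flow \<alpha> F \<longleftrightarrow>
     (\<forall>s\<in>{0..1}. F s s = mat 1 \<and>
        (\<forall>t\<in>{0..1}. (F s has_vector_derivative (\<alpha> t ** F s t)) (at t within {0..1})))"

definition Gam :: "(real \<Rightarrow> real^'m^'d) \<Rightarrow> real \<Rightarrow> real^'d^'d" where
  "Gam sG w = sG w ** transpose (sG w)"

definition hh :: "(real \<Rightarrow> real \<Rightarrow> real^'d^'d) \<Rightarrow> (real \<Rightarrow> real^'m^'d) \<Rightarrow> real \<Rightarrow> real \<Rightarrow> real \<Rightarrow> real^'d^'d" where
  "hh F sG u s t = integral {s..t} (\<lambda>w. F w u ** Gam sG w ** transpose (F w u))"

definition pos_def_mat :: "real^'d^'d \<Rightarrow> bool" where
  "pos_def_mat A \<longleftrightarrow> transpose A = A \<and> (\<forall>x. x \<noteq> 0 \<longrightarrow> x \<bullet> (A *v x) > 0)"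

definition is_cholesky :: "((real, 'd::{finite,linorder}) vec, 'd) vec \<Rightarrow> ((real, 'd) vec, 'd) vec \<Rightarrow> bool" where
  "is_cholesky \<sigma> S \<longleftrightarrow> (\<forall>i j. i < j \<longrightarrow> \<sigma> $ i $ j = 0) \<and> (\<forall>i. \<sigma> $ i $ i > 0) \<and> \<sigma> ** transpose \<sigma> = S"

text \<open>Dyadic nested partition: index set I minus (0,0) is {(n,k). n \<ge> 1, k < 2^(n-1)}.\<close>
definition is_partition :: "real \<Rightarrow> (nat \<Rightarrow> nat \<Rightarrow> real) \<Rightarrow> (nat \<Rightarrow> nat \<Rightarrow> real) \<Rightarrow> (nat \<Rightarrow> nat \<Rightarrow> real) \<Rightarrow> bool" where
  "is_partition \<rho> l m r \<longleftrightarrow> 0 < \<rho> \<and> \<rho> < 1 \<and> l 1 0 = 0 \<and> r 1 0 = 1 \<and>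
     (\<forall>n k. 1 \<le> n \<and> k < 2^(n-1) \<longrightarrow>
        l n k < m n k \<and> m n k < r n k \<and>
        l (n+1) (2*k) = l n k \<and> r (n+1) (2*k) = m n k \<and> l (n+1) (2*k+1) = m n k \<and>
        r (n+1) (2*k+1) = r n k \<and>
        max (r n k - m n k) (m n k - l n k) < \<rho> * (r n k - l n k))"

definition SigmaM where
  "SigmaM F sG l m r n k =
     hh F sG (m n k) (l n k) (m n k) ** matrix_inv (hh F sG (m n k) (l n k) (r n k)) ** hh F sG (m n k) (m n k) (r n k)"

definition LM where
  "LM F sG \<sigma> l m n k = matrix_inv (hh F sG 0 (l n k) (m n k)) ** matrix_inv (F 0 (m n k)) ** \<sigma> n k"

definition RM where
  "RM F sG \<sigma> m r n k = matrix_inv (hh F sG 0 (m n k) (r n k)) ** matrix_inv (F 0 (m n k)) ** \<sigma> n k"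

definition MM where
  "MM F \<sigma> m n k = transpose (F 0 (m n k)) ** transpose (matrix_inv (\<sigma> n k))"

end

theory Submission
  imports Defs
begin

text \<open>
  Changing the base point of \<open>h\<close> conjugates it by the flow, \<open>h\<^sub>u(s,t) = F(v,u) h\<^sub>v(s,t) F(v,u)\<^sup>T\<close>,
  because \<open>F\<close> is a cocycle; the cocycle identity holds since both sides solve the same
  linear ODE, and such solutions are unique by a Gronwall estimate on \<open>|D|\<^sup>2\<close>.
  With \<open>A = h\<^sub>m(l,m)\<close> and \<open>B = h\<^sub>m(m,r)\<close>, additivity of the integral gives \<open>h\<^sub>m(l,r) = A + B\<close>,
  so \<open>\<Sigma> = A (A + B)\<^sup>-\<^sup>1 B\<close> is a parallel sum and \<open>\<Sigma>\<^sup>-\<^sup>1 = A\<^sup>-\<^sup>1 + B\<^sup>-\<^sup>1\<close>. For (i), moving the base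
  point of \<open>h = h\<^sub>0\<close> to \<open>m\<close> turns \<open>L + R\<close> into \<open>g(m)\<^sup>T \<Sigma>\<^sup>-\<^sup>1 \<sigma>\<close>, and \<open>\<Sigma>\<^sup>-\<^sup>1 \<sigma> = \<sigma>\<^sup>-\<^sup>T\<close> because
  \<open>\<Sigma> = \<sigma> \<sigma>\<^sup>T\<close>. Non-degeneracy, read through the change of base, makes every \<open>h\<^sub>w(a,b)\<close>
  with \<open>a < b\<close> invertible.
\<close>

lemma matrix_add_rdistrib: "(A + B) ** C = A ** C + B ** (C :: 'a::semiring_1^_^_)"
  by (vector matrix_matrix_mult_def sum.distrib[symmetric] field_simps)

lemma matrix_diff_ldistrib: "A ** (B - C) = A ** B - A ** (C :: 'a::ring_1^_^_)"
  by (vector matrix_matrix_mult_def sum_subtractf[symmetric] field_simps)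

lemma bounded_bilinear_matrix_mult:
  "bounded_bilinear ((**) :: real^'n^'m \<Rightarrow> real^'p^'n \<Rightarrow> real^'p^'m)"
  unfolding bilinear_conv_bounded_bilinear[symmetric] bilinear_def linear_iff
  by (simp add: matrix_add_ldistrib matrix_add_rdistrib scalar_matrix_assoc matrix_scalar_ac)

lemma bounded_linear_transpose: "bounded_linear (transpose :: real^'n^'m \<Rightarrow> real^'m^'n)"
  unfolding linear_conv_bounded_linear[symmetric] linear_iff
  by (simp add: transpose_def vec_eq_iff)

lemma continuous_on_matrix_mult [continuous_intros]:
  fixes f :: "'a::topological_space \<Rightarrow> real^'n^'m" and g :: "'a \<Rightarrow> real^'p^'n"
  shows "continuous_on S f \<Longrightarrow> continuous_on S g \<Longrightarrow> continuous_on S (\<lambda>x. f x ** g x)"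
  by (rule bounded_bilinear.continuous_on[OF bounded_bilinear_matrix_mult])

lemma continuous_on_transpose [continuous_intros]:
  fixes f :: "'a::topological_space \<Rightarrow> real^'n^'m"
  shows "continuous_on S f \<Longrightarrow> continuous_on S (\<lambda>x. transpose (f x))"
  by (rule bounded_linear.continuous_on[OF bounded_linear_transpose])

lemma matrix_inv_unique:
  fixes A B :: "'a::field^'n^'n"
  assumes "A ** B = mat 1"
  shows "matrix_inv A = B"
proof -
  have "invertible A"
    using assms invertible_right_inverse by blast
  then have "A ** matrix_inv A = mat 1 \<and> matrix_inv A ** A = mat 1"
    unfolding invertible_def matrix_inv_def by (rule someI_ex)
  then have "matrix_inv A = matrix_inv A ** (A ** B)"
    using assms by simp
  also have "\<dots> = B"
    using \<open>A ** matrix_inv A = mat 1 \<and> matrix_inv A ** A = mat 1\<close> by (simp add: matrix_mul_assoc)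
  finally show ?thesis .
qed

lemma matrix_inv_right:
  fixes A :: "'a::field^'n^'n"
  assumes "invertible A"
  shows "A ** matrix_inv A = mat 1"
  using assms matrix_inv_unique unfolding invertible_def by metis

lemma matrix_inv_left:
  fixes A :: "'a::field^'n^'n"
  assumes "invertible A"
  shows "matrix_inv A ** A = mat 1"
  using matrix_inv_right[OF assms] matrix_left_right_inverse by blast

lemma matrix_inv_mult:
  fixes A B :: "'a::field^'n^'n"
  assumes "invertible A" "invertible B"
  shows "matrix_inv (A ** B) = matrix_inv B ** matrix_inv A"
proof (rule matrix_inv_unique)
  have "A ** B ** (matrix_inv B ** matrix_inv A) = A ** (B ** matrix_inv B) ** matrix_inv A"
    by (simp only: matrix_mul_assoc)
  then show "A ** B ** (matrix_inv B ** matrix_inv A) = mat 1"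
    using assms by (simp add: matrix_inv_right)
qed

lemma matrix_inv_transpose:
  fixes A :: "'a::field^'n^'n"
  assumes "invertible A"
  shows "matrix_inv (transpose A) = transpose (matrix_inv A)"
  by (rule matrix_inv_unique)
     (metis matrix_transpose_mul matrix_inv_left[OF assms] transpose_mat)

lemma invertible_matrix_inv:
  fixes A :: "'a::field^'n^'n"
  assumes "invertible A"
  shows "invertible (matrix_inv A)"
  using assms matrix_inv_left invertible_right_inverse by blast

lemma matrix_inv_parallel_sum:
  fixes A B :: "'a::field^'n^'n"
  assumes "invertible A" "invertible B" "invertible (A + B)"
  shows "matrix_inv (A ** matrix_inv (A + B) ** B) = matrix_inv A + matrix_inv B"
proof (rule matrix_inv_unique, subst matrix_left_right_inverse)
  have "(matrix_inv A + matrix_inv B) ** A = matrix_inv B ** (A + B)"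
    using assms by (simp add: matrix_add_rdistrib matrix_add_ldistrib matrix_inv_left add.commute
        flip: matrix_mul_assoc)
  then have "(matrix_inv A + matrix_inv B) ** (A ** matrix_inv (A + B) ** B)
      = matrix_inv B ** ((A + B) ** matrix_inv (A + B)) ** B"
    by (simp add: matrix_mul_assoc)
  then show "(matrix_inv A + matrix_inv B) ** (A ** matrix_inv (A + B) ** B) = mat 1"
    using assms by (simp add: matrix_inv_right matrix_inv_left)
qed

lemma continuous_on_det [continuous_intros]:
  fixes A :: "'b::topological_space \<Rightarrow> 'a::real_normed_field^'n^'n"
  assumes "continuous_on S A"
  shows "continuous_on S (\<lambda>x. det (A x))"
  unfolding det_def by (intro continuous_intros assms)

lemma matrix_inv_cramer:
  fixes A :: "'a::field^'n^'n"
  assumes "invertible A"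
  shows "matrix_inv A = (\<chi> k j. det (\<chi> i i'. if i' = k then axis j 1 $ i else A $ i $ i') / det A)"
proof -
  have "matrix_inv A $ k $ j = det (\<chi> i i'. if i' = k then axis j 1 $ i else A $ i $ i') / det A"
    for k j
  proof -
    have "A *v (matrix_inv A *v axis j 1) = axis j 1"
      using matrix_inv_right[OF assms] by (simp add: matrix_vector_mul_assoc)
    moreover have "(matrix_inv A *v axis j 1) $ k = matrix_inv A $ k $ j"
      by (simp add: matrix_vector_mult_def axis_def if_distrib cong: if_cong)
    ultimately show ?thesis
      using assms by (simp add: cramer invertible_det_nz)
  qed
  then show ?thesis
    by (simp add: vec_eq_iff)
qed

lemma continuous_on_matrix_inv [continuous_intros]:
  fixes A :: "'b::topological_space \<Rightarrow> 'a::real_normed_field^'n^'n"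
  assumes "continuous_on S A" "\<And>x. x \<in> S \<Longrightarrow> invertible (A x)"
  shows "continuous_on S (\<lambda>x. matrix_inv (A x))"
proof -
  have "continuous_on S (\<lambda>x. if i' = k then axis j 1 $ i else A x $ i $ i')" for i i' j k
    using assms(1) by (cases "i' = k") (simp_all add: continuous_on_component)
  then have "continuous_on S
      (\<lambda>x. \<chi> k j. det (\<chi> i i'. if i' = k then axis j 1 $ i else A x $ i $ i') / det (A x))"
    using assms by (intro continuous_intros) (auto simp: invertible_det_nz)
  then show ?thesis
    by (rule continuous_on_eq) (simp add: assms matrix_inv_cramer)
qed

lemma gronwall_zero:
  fixes q q' :: "real \<Rightarrow> real"
  assumes cont: "continuous_on {a..b} q"
    and deriv: "\<And>x. x \<in> {a<..<b} \<Longrightarrow> (q has_real_derivative q' x) (at x)"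
    and bound: "\<And>x. x \<in> {a<..<b} \<Longrightarrow> \<bar>q' x\<bar> \<le> c * q x"
    and nonneg: "\<And>x. x \<in> {a..b} \<Longrightarrow> 0 \<le> q x"
    and v: "v \<in> {a..b}" "q v = 0" and t: "t \<in> {a..b}"
  shows "q t = 0"
proof (cases "v \<le> t")
  case True
  have "exp (- c * t) * q t \<le> exp (- c * v) * q v"
  proof (rule DERIV_nonpos_imp_decreasing_open[OF True])
    fix x assume "v < x" "x < t"
    then have x: "x \<in> {a<..<b}"
      using v t by auto
    show "\<exists>y. ((\<lambda>x. exp (- c * x) * q x) has_real_derivative y) (at x) \<and> y \<le> 0"
      using bound[OF x] deriv[OF x]
      by (auto intro!: exI derivative_eq_intros simp: algebra_simps mult_left_mono)
  next
    show "continuous_on {v..t} (\<lambda>x. exp (- c * x) * q x)"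
      using v t by (intro continuous_intros continuous_on_subset[OF cont]) auto
  qed
  then show ?thesis
    using v nonneg[OF t] by (simp add: mult_le_0_iff)
next
  case False
  have "exp (c * t) * q t \<le> exp (c * v) * q v"
  proof (rule DERIV_nonneg_imp_increasing_open[of t v "\<lambda>x. exp (c * x) * q x"])
    show "t \<le> v"
      using False by simp
  next
    fix x assume "t < x" "x < v"
    then have x: "x \<in> {a<..<b}"
      using v t by auto
    have "0 \<le> exp (c * x) * (q' x + c * q x)"
      using bound[OF x] by (intro mult_nonneg_nonneg) auto
    with deriv[OF x] show "\<exists>y. ((\<lambda>x. exp (c * x) * q x) has_real_derivative y) (at x) \<and> 0 \<le> y"
      by (auto intro!: exI derivative_eq_intros simp: algebra_simps)
  next
    show "continuous_on {t..v} (\<lambda>x. exp (c * x) * q x)"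
      using v t by (intro continuous_intros continuous_on_subset[OF cont]) auto
  qed
  then show ?thesis
    using v nonneg[OF t] by (simp add: mult_le_0_iff)
qed

lemma linear_matrix_ode_zero:
  fixes \<alpha> :: "real \<Rightarrow> real^'n^'n" and D :: "real \<Rightarrow> real^'p^'n"
  assumes cont: "continuous_on {a..b} \<alpha>"
    and ode: "\<And>t. t \<in> {a..b} \<Longrightarrow> (D has_vector_derivative \<alpha> t ** D t) (at t within {a..b})"
    and v: "v \<in> {a..b}" "D v = 0" and t: "t \<in> {a..b}"
  shows "D t = 0"
proof -
  obtain K where K_pos: "K > 0"
    and K: "\<And>X Y. norm ((X :: real^'n^'n) ** (Y :: real^'p^'n)) \<le> norm X * norm Y * K"
    using bounded_bilinear.pos_bounded[OF bounded_bilinear_matrix_mult] by blast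
  obtain C where C: "\<And>x. x \<in> {a..b} \<Longrightarrow> norm (\<alpha> x) \<le> C"
    using compact_imp_bounded[OF compact_continuous_image[OF cont compact_Icc]]
    unfolding bounded_iff by (meson imageI)
  have bound: "\<bar>2 * (D x \<bullet> (\<alpha> x ** D x))\<bar> \<le> 2 * (C * K) * (D x \<bullet> D x)"
    if x: "x \<in> {a<..<b}" for x
  proof -
    have "\<bar>D x \<bullet> (\<alpha> x ** D x)\<bar> \<le> norm (D x) * norm (\<alpha> x ** D x)"
      by (rule Cauchy_Schwarz_ineq2)
    also have "\<dots> \<le> norm (D x) * (norm (\<alpha> x) * norm (D x) * K)"
      by (intro mult_left_mono K) simp
    also have "\<dots> \<le> norm (D x) * (C * norm (D x) * K)"
      using C[of x] x K_pos by (intro mult_left_mono mult_right_mono) auto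
    finally show ?thesis
      by (simp add: power2_norm_eq_inner[symmetric] power2_eq_square algebra_simps)
  qed
  have deriv: "((\<lambda>x. D x \<bullet> D x) has_real_derivative 2 * (D x \<bullet> (\<alpha> x ** D x))) (at x)"
    if x: "x \<in> {a<..<b}" for x
  proof -
    have "at x within {a..b} = at x"
      using x by (intro at_within_interior) auto
    then have "(D has_vector_derivative \<alpha> x ** D x) (at x)"
      using ode[of x] x by auto
    from bounded_bilinear.has_vector_derivative[OF bounded_bilinear_inner this this]
    show ?thesis
      by (simp add: has_real_derivative_iff_has_vector_derivative inner_commute)
  qed
  have "continuous_on {a..b} D"
    using ode has_vector_derivative_continuous continuous_on_eq_continuous_within by blast
  then have "D t \<bullet> D t = 0"
    by (intro gronwall_zero[OF _ deriv bound _ v(1) _ t] continuous_intros)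
       (simp_all add: v(2))
  then show ?thesis
    by simp
qed

context
  fixes \<alpha> :: "real \<Rightarrow> real^'n^'n" and F :: "real \<Rightarrow> real \<Rightarrow> real^'n^'n"
  assumes cont: "continuous_on {0..1} \<alpha>" and flow: "is_flow \<alpha> F"
begin

lemma flow_cocycle:
  assumes "s \<in> {0..1}" "v \<in> {0..1}" "t \<in> {0..1}"
  shows "F s t = F v t ** F s v"
proof -
  have "F s t - F v t ** F s v = 0"
  proof (rule linear_matrix_ode_zero[OF cont _ assms(2) _ assms(3)])
    fix x :: real assume x: "x \<in> {0..1}"
    have Fs: "(F s has_vector_derivative \<alpha> x ** F s x) (at x within {0..1})"
      and Fv: "(F v has_vector_derivative \<alpha> x ** F v x) (at x within {0..1})"
      using flow assms x unfolding is_flow_def by blast+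
    have "((\<lambda>t. F v t ** F s v) has_vector_derivative (\<alpha> x ** F v x) ** F s v) (at x within {0..1})"
      using bounded_bilinear.has_vector_derivative[OF bounded_bilinear_matrix_mult
          Fv has_vector_derivative_const] by simp
    from has_vector_derivative_diff[OF Fs this]
    show "((\<lambda>t. F s t - F v t ** F s v) has_vector_derivative
        \<alpha> x ** (F s x - F v x ** F s v)) (at x within {0..1})"
      by (simp add: matrix_diff_ldistrib matrix_mul_assoc)
  qed (use flow assms in \<open>simp add: is_flow_def\<close>)
  then show ?thesis
    by simp
qed

lemma flow_inverse:
  assumes "s \<in> {0..1}" "v \<in> {0..1}"
  shows "F v s ** F s v = mat 1"
proof -
  have "F s s = mat 1"
    using flow assms unfolding is_flow_def by blast
  then show ?thesis
    using flow_cocycle[OF assms(1,2,1)] by simp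
qed

lemma invertible_flow:
  assumes "s \<in> {0..1}" "v \<in> {0..1}"
  shows "invertible (F s v)"
  using flow_inverse[OF assms] invertible_left_inverse by blast

lemma matrix_inv_flow:
  assumes "s \<in> {0..1}" "v \<in> {0..1}"
  shows "matrix_inv (F s v) = F v s"
  using flow_inverse[OF assms(2,1)] by (rule matrix_inv_unique)

lemma continuous_on_flow:
  assumes "s \<in> {0..1}"
  shows "continuous_on {0..1} (F s)"
  unfolding continuous_on_eq_continuous_within
proof
  fix t :: real assume "t \<in> {0..1}"
  then have "(F s has_vector_derivative \<alpha> t ** F s t) (at t within {0..1})"
    using flow assms unfolding is_flow_def by blast
  then show "continuous (at t within {0..1}) (F s)"
    by (rule has_vector_derivative_continuous)
qed

lemma continuous_on_flow_initial:
  assumes u: "u \<in> {0..1}"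
  shows "continuous_on {0..1} (\<lambda>w. F w u)"
proof -
  \<comment> \<open>\<open>is_flow\<close> only controls the second argument; the first is reached through the inverse.\<close>
  have "continuous_on {0..1} (\<lambda>w. F 0 u ** matrix_inv (F 0 w))"
    by (intro continuous_intros continuous_on_flow invertible_flow) auto
  moreover have "F 0 u ** matrix_inv (F 0 w) = F w u" if "w \<in> {0..1}" for w
    using that u by (simp add: matrix_inv_flow flow_cocycle[of w 0 u])
  ultimately show ?thesis
    by (rule continuous_on_eq)
qed

end

lemma pos_def_mat_invertible:
  fixes A :: "real^'n^'n"
  assumes "pos_def_mat A"
  shows "invertible A"
proof -
  have "inj ((*v) A)"
  proof (rule injI)
    fix x y assume "A *v x = A *v y"
    then have "(x - y) \<bullet> (A *v (x - y)) = 0"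
      by (simp add: matrix_vector_mult_diff_distrib)
    then show "x = y"
      using assms unfolding pos_def_mat_def by (metis less_irrefl eq_iff_diff_eq_0)
  qed
  then show ?thesis
    using det_nz_iff_inj[OF matrix_vector_mul_linear[of A]] by (simp add: invertible_det_nz)
qed

lemma matrix_inv_cholesky:
  fixes \<sigma> :: "real^'n^'n"
  assumes "\<sigma> ** transpose \<sigma> = S" "invertible S"
  shows "matrix_inv S ** \<sigma> = transpose (matrix_inv \<sigma>)"
proof -
  have "invertible \<sigma>"
    using assms by (auto simp: invertible_det_nz det_mul det_transpose)
  then show ?thesis
    using assms(1) by (auto simp: matrix_inv_mult transpose_invertible matrix_inv_transpose
        matrix_inv_left simp flip: matrix_mul_assoc)
qed

context
  fixes \<alpha> :: "real \<Rightarrow> real^'n^'n" and F :: "real \<Rightarrow> real \<Rightarrow> real^'n^'n"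
    and sG :: "real \<Rightarrow> real^'m^'n"
  assumes cont: "continuous_on {0..1} \<alpha>" and flow: "is_flow \<alpha> F"
    and cont_sG: "continuous_on {0..1} sG"
begin

lemma hh_integrable:
  assumes "u \<in> {0..1}" "0 \<le> s" "t \<le> 1"
  shows "(\<lambda>w. F w u ** Gam sG w ** transpose (F w u)) integrable_on {s..t}"
proof (rule integrable_continuous_interval)
  have "continuous_on {0..1} (\<lambda>w. F w u ** Gam sG w ** transpose (F w u))"
    unfolding Gam_def
    by (intro continuous_intros cont_sG continuous_on_flow_initial[OF cont flow assms(1)])
  then show "continuous_on {s..t} (\<lambda>w. F w u ** Gam sG w ** transpose (F w u))"
    by (rule continuous_on_subset) (use assms in auto)
qed

lemma hh_combine:
  assumes "u \<in> {0..1}" "0 \<le> a" "a \<le> c" "c \<le> b" "b \<le> 1"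
  shows "hh F sG u a c + hh F sG u c b = hh F sG u a b"
  unfolding hh_def
  by (rule Henstock_Kurzweil_Integration.integral_combine[OF assms(3,4) hh_integrable[OF assms(1,2,5)]])

lemma hh_change_base:
  assumes "u \<in> {0..1}" "v \<in> {0..1}" "0 \<le> s" "t \<le> 1"
  shows "hh F sG u s t = F v u ** hh F sG v s t ** transpose (F v u)"
proof -
  have "hh F sG u s t
      = integral {s..t} (\<lambda>w. F v u ** (F w v ** Gam sG w ** transpose (F w v)) ** transpose (F v u))"
    unfolding hh_def
  proof (rule integral_cong)
    fix w assume "w \<in> {s..t}"
    then have "F w u = F v u ** F w v"
      using assms flow_cocycle[OF cont flow, of w v u] by auto
    then show "F w u ** Gam sG w ** transpose (F w u)
        = F v u ** (F w v ** Gam sG w ** transpose (F w v)) ** transpose (F v u)"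
      by (simp add: matrix_transpose_mul matrix_mul_assoc)
  qed
  also have "\<dots> = F v u ** hh F sG v s t ** transpose (F v u)"
    unfolding hh_def
    by (intro integral_linear[OF hh_integrable[OF assms(2-4)], unfolded o_def]
        bounded_linear_compose[OF
          bounded_bilinear.bounded_linear_left[OF bounded_bilinear_matrix_mult]
          bounded_bilinear.bounded_linear_right[OF bounded_bilinear_matrix_mult]])
  finally show ?thesis .
qed

lemma invertible_hh:
  assumes nondeg: "pos_def_mat (F a b ** hh F sG a a b ** transpose (F a b))"
    and "0 \<le> a" "a \<le> b" "b \<le> 1" "u \<in> {0..1}"
  shows "invertible (hh F sG u a b)"
proof -
  have ab: "a \<in> {0..1}" "b \<in> {0..1}"
    using assms by auto
  have "invertible (hh F sG b a b)"
    using pos_def_mat_invertible[OF nondeg] hh_change_base[OF ab(2,1)] assms by simp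
  then have "invertible (F b u ** hh F sG b a b ** transpose (F b u))"
    by (intro invertible_mult transpose_invertible invertible_flow[OF cont flow] ab assms(5))
  then show ?thesis
    using hh_change_base[OF assms(5) ab(2)] assms by simp
qed

lemma matrix_inv_hh_change_base:
  assumes "u \<in> {0..1}" "v \<in> {0..1}" "0 \<le> s" "t \<le> 1" "invertible (hh F sG v s t)"
  shows "matrix_inv (hh F sG u s t) = transpose (F u v) ** matrix_inv (hh F sG v s t) ** F u v"
  using assms
  by (simp add: hh_change_base[OF assms(1-4)] matrix_inv_mult invertible_mult transpose_invertible
      invertible_flow[OF cont flow] matrix_inv_transpose matrix_inv_flow[OF cont flow] matrix_mul_assoc)

lemma matrix_inv_hh_mult_inverse_flow:
  assumes "u \<in> {0..1}" "0 \<le> s" "t \<le> 1" "invertible (hh F sG u s t)"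
  shows "matrix_inv (hh F sG 0 s t) ** matrix_inv (F 0 u)
    = transpose (F 0 u) ** matrix_inv (hh F sG u s t)"
  using assms flow_inverse[OF cont flow assms(1), of 0]
  by (simp add: matrix_inv_hh_change_base[of 0 u] matrix_inv_flow[OF cont flow] flip: matrix_mul_assoc)

end

lemma partition_bounds:
  assumes "is_partition \<rho> l m r" "1 \<le> n" "k < 2^(n-1)"
  shows "0 \<le> l n k \<and> r n k \<le> 1"
  using assms(2,3)
proof (induction n arbitrary: k rule: dec_induct)
  case base
  then show ?case
    using assms(1) unfolding is_partition_def by simp
next
  case (step n)
  define k' where "k' = k div 2"
  have "k' < 2^(n-1)"
    using step.prems step.hyps unfolding k'_def by (cases n) (auto simp: less_mult_imp_div_less)
  then have "0 \<le> l n k' \<and> r n k' \<le> 1" "l n k' < m n k' \<and> m n k' < r n k'"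
    "l (Suc n) (2*k') = l n k' \<and> r (Suc n) (2*k') = m n k'"
    "l (Suc n) (2*k'+1) = m n k' \<and> r (Suc n) (2*k'+1) = r n k'"
    using step.IH assms(1) step.hyps unfolding is_partition_def by auto
  moreover have "k = 2*k' \<or> k = 2*k'+1"
    unfolding k'_def by presburger
  ultimately show ?case
    by auto
qed

theorem proposition3:
  fixes \<alpha> :: "real \<Rightarrow> ((real, 'd::{finite,linorder}) vec, 'd) vec"
    and sG :: "real \<Rightarrow> ((real, 'm::finite) vec, 'd) vec"
    and F :: "real \<Rightarrow> real \<Rightarrow> ((real, 'd) vec, 'd) vec"
    and \<rho> :: real and l m r :: "nat \<Rightarrow> nat \<Rightarrow> real"
    and \<sigma> :: "nat \<Rightarrow> nat \<Rightarrow> ((real, 'd) vec, 'd) vec"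
  assumes "continuous_on {0..1} \<alpha>" and "continuous_on {0..1} sG"
    and "is_flow \<alpha> F"
    and "\<And>u v. 0 \<le> u \<Longrightarrow> u < v \<Longrightarrow> v \<le> 1 \<Longrightarrow>
           pos_def_mat (F u v ** hh F sG u u v ** transpose (F u v))"
    and "is_partition \<rho> l m r"
    and "\<And>n k. 1 \<le> n \<Longrightarrow> k < 2^(n-1) \<Longrightarrow> is_cholesky (\<sigma> n k) (SigmaM F sG l m r n k)"
    and "1 \<le> n" and "k < 2^(n-1)"
  shows "MM F \<sigma> m n k = LM F sG \<sigma> l m n k + RM F sG \<sigma> m r n k
     \<and> matrix_inv (SigmaM F sG l m r n k) =
         matrix_inv (hh F sG (m n k) (l n k) (m n k)) + matrix_inv (hh F sG (m n k) (m n k) (r n k))"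
proof -
  define A where "A = hh F sG (m n k) (l n k) (m n k)"
  define B where "B = hh F sG (m n k) (m n k) (r n k)"
  have ord: "0 \<le> l n k" "l n k < m n k" "m n k < r n k" "r n k \<le> 1"
    using partition_bounds[OF assms(5,7,8)] assms(5,7,8) unfolding is_partition_def by auto
  have sum: "A + B = hh F sG (m n k) (l n k) (r n k)"
    unfolding A_def B_def using ord by (intro hh_combine[OF assms(1,3,2)]) auto
  have inv: "invertible A" "invertible B" "invertible (A + B)"
    unfolding sum unfolding A_def B_def using ord by (auto intro!: invertible_hh[OF assms(1,3,2,4)])
  have Sigma: "SigmaM F sG l m r n k = A ** matrix_inv (A + B) ** B"
    unfolding SigmaM_def sum unfolding A_def B_def ..
  have Sigma_inv: "matrix_inv (SigmaM F sG l m r n k) = matrix_inv A + matrix_inv B"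
    unfolding Sigma using inv by (rule matrix_inv_parallel_sum)
  have "invertible (SigmaM F sG l m r n k)"
    unfolding Sigma using inv by (intro invertible_mult invertible_matrix_inv)
  with assms(6-8) have "(matrix_inv A + matrix_inv B) ** \<sigma> n k = transpose (matrix_inv (\<sigma> n k))"
    unfolding is_cholesky_def Sigma_inv[symmetric] by (blast intro: matrix_inv_cholesky)
  moreover have "LM F sG \<sigma> l m n k + RM F sG \<sigma> m r n k
      = transpose (F 0 (m n k)) ** ((matrix_inv A + matrix_inv B) ** \<sigma> n k)"
    using matrix_inv_hh_mult_inverse_flow[OF assms(1,3,2), of "m n k" "l n k" "m n k"]
      matrix_inv_hh_mult_inverse_flow[OF assms(1,3,2), of "m n k" "m n k" "r n k"] inv ord
    unfolding LM_def RM_def A_def B_def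
    by (simp add: matrix_add_ldistrib matrix_add_rdistrib matrix_mul_assoc)
  ultimately show ?thesis
    using Sigma_inv unfolding MM_def A_def B_def by simp
qed

end
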